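(* Let $(X_n,\|\cdot\|_n)_{n\ge1}$ be a sequence of Banach spaces, let $Z=(\sum_{n=1}^\infty\oplus X_n)_1$ with norm $\|(x_n)\|_Z=\sum_n\|x_n\|_n$, and let $(X,\|\cdot\|)$ be the completion of $c_{00}((X_n))$ under the norm defined in the context. Then $Z$ and $X$ are $2$-isomorphic; more precisely, the identity map of $c_{00}((X_n))$ extends to a linear isomorphism $T:Z\to X$ with $\frac12\|z\|_Z\le\|Tz\|\le\|z\|_Z$ for all $z\in Z$.
   Context: $c_{00}((X_n))$ is the vector space of sequences $(x_1,x_2,\dots)$ with $x_k\in X_k$ and only finitely many $x_k\ne0$; $(x_1,\dots,x_n)$ denotes $(x_1,\dots,x_n,0,0,\dots)$. The norm is defined inductively: $\|(x_1)\|=\|x_1\|_1$ (the norm of $X_1$), and for $n\ge2$, $$\|(x_1,\dots,x_n)\|=\Big(1-\tfrac{1}{n+1}\Big)\big(\|x_n\|_n+\|(x_1,\dots,x_{n-1})\|\big)+\tfrac{1}{n+1}\max\Big\{\tfrac{\|x_n\|_n}{n},\ \|(x_1,\dots,x_{n-1})\|\Big\}.$$ *)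

theory Defs
  imports "HOL-Analysis.Analysis"
begin

text \<open>The spaces X_n (n \<ge> 1) are modelled as closed linear subspaces S n of one
  ambient real Banach space 'a (every sequence of Banach spaces embeds isometrically
  into e.g. their l_infinity-sum, so this is no loss of generality).
  Sequences are functions nat => 'a, indexed from 1; the entry at index 0 is required to be 0.\<close>

definition c00 :: "(nat \<Rightarrow> 'a set) \<Rightarrow> (nat \<Rightarrow> 'a::real_normed_vector) set" where
  "c00 S = {x. x 0 = 0 \<and> (\<forall>k. x k \<in> S k) \<and> finite {k. x k \<noteq> 0}}"

fun tnorm :: "(nat \<Rightarrow> 'a::real_normed_vector) \<Rightarrow> nat \<Rightarrow> real" where
  "tnorm x 0 = 0"
| "tnorm x (Suc n) =
     (if n = 0 then norm (x 1)
      else (1 - 1 / (real (Suc n) + 1)) * (norm (x (Suc n)) + tnorm x n)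
           + (1 / (real (Suc n) + 1)) * max (norm (x (Suc n)) / real (Suc n)) (tnorm x n))"

definition c00_norm :: "(nat \<Rightarrow> 'a::real_normed_vector) \<Rightarrow> real" where
  "c00_norm x = tnorm x (LEAST N. \<forall>k>N. x k = 0)"

definition l1sum :: "(nat \<Rightarrow> 'a set) \<Rightarrow> (nat \<Rightarrow> 'a::real_normed_vector) set" where
  "l1sum S = {z. z 0 = 0 \<and> (\<forall>k. z k \<in> S k) \<and> summable (\<lambda>k. norm (z k))}"

definition l1norm :: "(nat \<Rightarrow> 'a::real_normed_vector) \<Rightarrow> real" where
  "l1norm z = (\<Sum>k. norm (z k))"

end

theory Submission
  imports Defs
begin

text \<open>Each step of the recursion lies between \<open>\<parallel>(x\<^sub>1,\<dots>,x\<^sub>n\<^sub>-\<^sub>1)\<parallel> + \<parallel>x\<^sub>n\<parallel>/2\<close> and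
  \<open>\<parallel>(x\<^sub>1,\<dots>,x\<^sub>n\<^sub>-\<^sub>1)\<parallel> + \<parallel>x\<^sub>n\<parallel>\<close>, so on finitely supported sequences the norm lies between
  half the \<open>\<ell>\<^sub>1\<close>-norm and the \<open>\<ell>\<^sub>1\<close>-norm. Any linear map on \<open>c\<^sub>0\<^sub>0\<close> with such two-sided
  \<open>\<ell>\<^sub>1\<close>-bounds extends, as the sum of its values on the coordinates, to an injective map on
  the \<open>\<ell>\<^sub>1\<close>-sum with the same bounds; its range is complete, because the \<open>\<ell>\<^sub>1\<close>-sum of
  closed subspaces of a Banach space is, and dense, so it is everything.\<close>

lemma tnorm_step_le:
  fixes a b m :: real
  assumes "0 \<le> a" "0 \<le> b" "1 \<le> m"
  shows "(1 - 1 / (m + 1)) * (a + b) + 1 / (m + 1) * max (a / m) b \<le> a + b"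
proof -
  have "a / m \<le> a"
    using assms by (simp add: divide_le_eq mult_le_cancel_left1)
  then have "max (a / m) b \<le> a + b"
    using assms by simp
  then have "1 / (m + 1) * max (a / m) b \<le> 1 / (m + 1) * (a + b)"
    using assms by (intro mult_left_mono) auto
  then show ?thesis by (simp add: algebra_simps)
qed

lemma tnorm_step_ge:
  fixes a b m :: real
  assumes "0 \<le> a" "0 \<le> b" "1 \<le> m"
  shows "b + a / 2 \<le> (1 - 1 / (m + 1)) * (a + b) + 1 / (m + 1) * max (a / m) b"
proof -
  have "1 / (m + 1) * b \<le> 1 / (m + 1) * max (a / m) b"
    using assms by (intro mult_left_mono) auto
  moreover have "1 / (m + 1) * a \<le> a / 2"
    using mult_left_mono[OF \<open>1 \<le> m\<close> \<open>0 \<le> a\<close>] assms by (simp add: field_simps)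
  moreover have "(1 - 1 / (m + 1)) * (a + b) + 1 / (m + 1) * max (a / m) b
      = a + b - 1 / (m + 1) * a - 1 / (m + 1) * b + 1 / (m + 1) * max (a / m) b"
    by (simp add: algebra_simps add_divide_distrib)
  ultimately show ?thesis by linarith
qed

lemma tnorm_nonneg: "0 \<le> tnorm x n"
proof (induction n)
  case (Suc n)
  then show ?case
    using tnorm_step_ge[OF norm_ge_zero[of "x (Suc n)"] Suc.IH, of "real (Suc n)"] by (cases "n = 0") auto
qed simp

lemma tnorm_le_sum_norm: "tnorm x n \<le> (\<Sum>k=1..n. norm (x k))"
proof (induction n)
  case (Suc n)
  then show ?case
    using tnorm_step_le[OF norm_ge_zero[of "x (Suc n)"] tnorm_nonneg[of x n], of "real (Suc n)"]
    by (cases "n = 0") (auto simp: sum.cl_ivl_Suc)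
qed simp

lemma half_sum_norm_le_tnorm: "(\<Sum>k=1..n. norm (x k)) / 2 \<le> tnorm x n"
proof (induction n)
  case (Suc n)
  show ?case
  proof (cases "n = 0")
    case False
    have "(\<Sum>k=1..Suc n. norm (x k)) / 2 = (\<Sum>k=1..n. norm (x k)) / 2 + norm (x (Suc n)) / 2"
      by (simp add: sum.cl_ivl_Suc add_divide_distrib)
    moreover have "tnorm x (Suc n) =
        (1 - 1 / (real (Suc n) + 1)) * (norm (x (Suc n)) + tnorm x n)
        + 1 / (real (Suc n) + 1) * max (norm (x (Suc n)) / real (Suc n)) (tnorm x n)"
      using False by simp
    ultimately show ?thesis
      using Suc.IH tnorm_step_ge[OF norm_ge_zero[of "x (Suc n)"] tnorm_nonneg[of x n], of "real (Suc n)"]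
      by linarith
  qed simp
qed simp

lemma c00_support_bound:
  assumes "x \<in> c00 S"
  obtains N where "c00_norm x = tnorm x N" and "\<And>k. k \<notin> {1..N} \<Longrightarrow> x k = 0"
proof
  define N where "N = (LEAST N. \<forall>k>N. x k = 0)"
  from assms have "finite {k. x k \<noteq> 0}" "x 0 = 0" by (auto simp: c00_def)
  then obtain m where "\<forall>k. x k \<noteq> 0 \<longrightarrow> k < m"
    using finite_nat_set_iff_bounded by auto
  then have "\<exists>N. \<forall>k>N. x k = 0" by (meson not_less_iff_gr_or_eq)
  then have "\<forall>k>N. x k = 0" unfolding N_def by (rule LeastI_ex)
  with \<open>x 0 = 0\<close> show "x k = 0" if "k \<notin> {1..N}" for k
    using that by (cases "k = 0") auto
  show "c00_norm x = tnorm x N" unfolding c00_norm_def N_def ..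
qed

lemma summable_norm_c00: "x \<in> c00 S \<Longrightarrow> summable (\<lambda>k. norm (x k))"
  by (erule c00_support_bound) (rule summable_finite[of "{1.._}"], auto)

lemma c00_norm_bounds:
  assumes "x \<in> c00 S"
  shows "l1norm x / 2 \<le> c00_norm x" and "c00_norm x \<le> l1norm x"
proof -
  obtain N where N: "c00_norm x = tnorm x N" "\<And>k. k \<notin> {1..N} \<Longrightarrow> x k = 0"
    using c00_support_bound[OF assms] by blast
  have "l1norm x = (\<Sum>k=1..N. norm (x k))"
    unfolding l1norm_def by (rule suminf_finite) (auto simp: N(2))
  then show "l1norm x / 2 \<le> c00_norm x" and "c00_norm x \<le> l1norm x"
    using N(1) half_sum_norm_le_tnorm tnorm_le_sum_norm by metis+
qed

lemma c00_subset_l1sum: "c00 S \<subseteq> l1sum S"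
  using summable_norm_c00 by (auto simp: c00_def l1sum_def)

lemma norm_le_l1norm:
  "summable (\<lambda>k. norm (z k)) \<Longrightarrow> norm (z k :: 'a::real_normed_vector) \<le> l1norm z"
  using sum_le_suminf[of "\<lambda>k. norm (z k)" "{k}"] by (simp add: l1norm_def)

lemma l1norm_nonneg: "summable (\<lambda>k. norm (z k :: 'a::real_normed_vector)) \<Longrightarrow> 0 \<le> l1norm z"
  unfolding l1norm_def by (rule suminf_nonneg) auto

lemma l1sum_add:
  assumes "\<And>n. subspace (S n)" "z \<in> l1sum S" "w \<in> l1sum S"
  shows "(\<lambda>k. z k + w k) \<in> l1sum S"
proof -
  have "summable (\<lambda>k. norm (z k + w k))"
    using assms(2,3) unfolding l1sum_def
    by (intro summable_norm_comparison_test[OF _ summable_add]) (auto intro: norm_triangle_ineq)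
  with assms show ?thesis by (auto simp: l1sum_def subspace_add)
qed

lemma l1sum_scale:
  assumes "\<And>n. subspace (S n)" "z \<in> l1sum S"
  shows "(\<lambda>k. c *\<^sub>R z k) \<in> l1sum S"
  using assms summable_mult[of "\<lambda>k. norm (z k)" "\<bar>c\<bar>"]
  by (auto simp: l1sum_def subspace_scale)

lemma l1sum_diff:
  assumes "\<And>n. subspace (S n)" "z \<in> l1sum S" "w \<in> l1sum S"
  shows "(\<lambda>k. z k - w k) \<in> l1sum S"
  using l1sum_add[OF assms(1,2) l1sum_scale[OF assms(1,3), of "-1"]] by simp

lemma l1norm_le_pointwise_limit:
  fixes w :: "nat \<Rightarrow> nat \<Rightarrow> 'a::real_normed_vector"
  assumes lim: "\<And>k. (\<lambda>i. w i k) \<longlonglongrightarrow> v k"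
    and summ: "\<And>i. summable (\<lambda>k. norm (w i k))"
    and bound: "\<forall>\<^sub>F i in sequentially. l1norm (w i) \<le> e"
  shows "summable (\<lambda>k. norm (v k))" and "l1norm v \<le> e"
proof -
  have partial: "(\<Sum>k<n. norm (v k)) \<le> e" for n
  proof (rule tendsto_upperbound[OF _ _ trivial_limit_sequentially])
    show "(\<lambda>i. \<Sum>k<n. norm (w i k)) \<longlonglongrightarrow> (\<Sum>k<n. norm (v k))"
      by (intro tendsto_sum tendsto_norm lim)
    show "\<forall>\<^sub>F i in sequentially. (\<Sum>k<n. norm (w i k)) \<le> e"
      using bound
    proof eventually_elim
      fix i assume "l1norm (w i) \<le> e"
      moreover have "(\<Sum>k<n. norm (w i k)) \<le> l1norm (w i)"
        unfolding l1norm_def by (rule sum_le_suminf[OF summ]) auto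
      ultimately show "(\<Sum>k<n. norm (w i k)) \<le> e" by linarith
    qed
  qed
  show "summable (\<lambda>k. norm (v k))"
    by (rule summableI_nonneg_bounded[OF _ partial]) auto
  then show "l1norm v \<le> e"
    unfolding l1norm_def by (rule suminf_le_const) (rule partial)
qed

lemma l1sum_pointwise_limit:
  fixes x :: "nat \<Rightarrow> nat \<Rightarrow> 'a::real_normed_vector"
  assumes clsd: "\<And>n. closed (S n)"
    and xs: "\<And>j. x j \<in> l1sum S"
    and lim: "\<And>k. (\<lambda>j. x j k) \<longlonglongrightarrow> z k"
    and summ: "summable (\<lambda>k. norm (x j k - z k))"
  shows "z \<in> l1sum S"
proof -
  have "(\<lambda>j. x j 0) = (\<lambda>j. 0)" "\<And>j k. x j k \<in> S k" using xs by (auto simp: l1sum_def fun_eq_iff)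
  then have "z 0 = 0"
    using lim[of 0] by (simp add: LIMSEQ_const_iff)
  have "z k \<in> S k" for k
    by (rule closed_sequentially[OF clsd _ lim]) (simp add: \<open>\<And>j k. x j k \<in> S k\<close>)
  have bound: "norm (z k) \<le> norm (x j k) + norm (x j k - z k)" for k
    using norm_triangle_sub[of "z k" "x j k"] by (simp add: norm_minus_commute)
  have "summable (\<lambda>k. norm (x j k))" using xs by (simp add: l1sum_def)
  then have "summable (\<lambda>k. norm (z k))"
    by (intro summable_norm_comparison_test[OF _ summable_add[OF _ summ]]) (use bound in auto)
  with \<open>z 0 = 0\<close> \<open>\<And>k. z k \<in> S k\<close> show ?thesis by (simp add: l1sum_def)
qed

lemma l1sum_complete:
  fixes x :: "nat \<Rightarrow> nat \<Rightarrow> 'a::banach"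
  assumes clsd: "\<And>n. closed (S n)"
    and xs: "\<And>j. x j \<in> l1sum S"
    and cauchy: "\<And>e. e > 0 \<Longrightarrow> \<exists>N. \<forall>i\<ge>N. \<forall>j\<ge>N. l1norm (\<lambda>k. x i k - x j k) < e"
  shows "\<exists>z\<in>l1sum S. (\<lambda>j. l1norm (\<lambda>k. x j k - z k)) \<longlonglongrightarrow> 0"
proof -
  have summ: "\<And>j. summable (\<lambda>k. norm (x j k))" using xs by (auto simp: l1sum_def)
  have summ_diff: "summable (\<lambda>k. norm (x i k - x j k))" for i j
    by (rule summable_norm_comparison_test[OF _ summable_add[OF summ summ]])
      (auto intro: norm_triangle_ineq4)
  have cauchy_coord: "Cauchy (\<lambda>j. x j k)" for k
  proof (rule CauchyI)
    fix e :: real assume "0 < e"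
    with cauchy obtain N where N: "\<forall>i\<ge>N. \<forall>j\<ge>N. l1norm (\<lambda>k. x i k - x j k) < e" by blast
    have "norm (x i k - x j k) < e" if "i \<ge> N" "j \<ge> N" for i j
      using norm_le_l1norm[OF summ_diff[of i j], of k] N that by fastforce
    then show "\<exists>M. \<forall>m\<ge>M. \<forall>n\<ge>M. norm (x m k - x n k) < e" by blast
  qed
  define z where "z k = lim (\<lambda>j. x j k)" for k
  have lim: "(\<lambda>j. x j k) \<longlonglongrightarrow> z k" for k
    unfolding z_def using cauchy_coord by (simp add: Cauchy_convergent_iff convergent_LIMSEQ_iff)
  have close: "\<exists>N. \<forall>j\<ge>N. summable (\<lambda>k. norm (x j k - z k)) \<and> l1norm (\<lambda>k. x j k - z k) \<le> e"
    if "e > 0" for e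
  proof -
    obtain N where N: "\<forall>i\<ge>N. \<forall>j\<ge>N. l1norm (\<lambda>k. x i k - x j k) < e"
      using cauchy \<open>e > 0\<close> by blast
    have "summable (\<lambda>k. norm (x j k - z k)) \<and> l1norm (\<lambda>k. x j k - z k) \<le> e" if "j \<ge> N" for j
    proof -
      have lim_diff: "(\<lambda>i. x j k - x i k) \<longlonglongrightarrow> x j k - z k" for k
        by (intro tendsto_diff tendsto_const lim)
      have "\<forall>\<^sub>F i in sequentially. l1norm (\<lambda>k. x j k - x i k) \<le> e"
        unfolding eventually_sequentially using N \<open>j \<ge> N\<close> less_imp_le by blast
      from l1norm_le_pointwise_limit[OF lim_diff summ_diff this] show ?thesis by blast
    qed
    then show ?thesis by blast
  qed
  obtain j where "summable (\<lambda>k. norm (x j k - z k))"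
    using close[of 1] by auto
  with l1sum_pointwise_limit[OF clsd xs lim] have "z \<in> l1sum S" .
  moreover have "(\<lambda>j. l1norm (\<lambda>k. x j k - z k)) \<longlonglongrightarrow> 0"
  proof (rule LIMSEQ_I)
    fix r :: real assume "0 < r"
    then obtain N where N: "\<forall>j\<ge>N. summable (\<lambda>k. norm (x j k - z k)) \<and> l1norm (\<lambda>k. x j k - z k) \<le> r / 2"
      using close[of "r / 2"] by auto
    have "norm (l1norm (\<lambda>k. x j k - z k) - 0) < r" if "j \<ge> N" for j
      using N l1norm_nonneg[of "\<lambda>k. x j k - z k"] \<open>0 < r\<close> that by auto
    then show "\<exists>N. \<forall>j\<ge>N. norm (l1norm (\<lambda>k. x j k - z k) - 0) < r" by blast
  qed
  ultimately show ?thesis by blast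
qed

definition seq_single :: "nat \<Rightarrow> 'a \<Rightarrow> nat \<Rightarrow> 'a::zero" where
  "seq_single k v = (\<lambda>i. if i = k then v else 0)"

definition seq_trunc :: "(nat \<Rightarrow> 'a) \<Rightarrow> nat \<Rightarrow> nat \<Rightarrow> 'a::zero" where
  "seq_trunc z n = (\<lambda>i. if i < n then z i else 0)"

lemma l1norm_seq_single: "l1norm (seq_single k (v::'a::real_normed_vector)) = norm v"
proof -
  have "l1norm (seq_single k v) = (\<Sum>i\<in>{k}. norm (seq_single k v i))"
    unfolding l1norm_def by (rule suminf_finite) (auto simp: seq_single_def)
  then show ?thesis by (simp add: seq_single_def)
qed

lemma l1norm_seq_trunc: "l1norm (seq_trunc z n) = (\<Sum>k<n. norm (z k :: 'a::real_normed_vector))"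
proof -
  have "l1norm (seq_trunc z n) = (\<Sum>i<n. norm (seq_trunc z n i))"
    unfolding l1norm_def by (rule suminf_finite) (auto simp: seq_trunc_def)
  then show ?thesis by (simp add: seq_trunc_def)
qed

lemma seq_single_in_c00:
  assumes "\<And>n. subspace (S n)" "z \<in> l1sum S"
  shows "seq_single k (z k) \<in> c00 S"
proof -
  have "{i. seq_single k (z k) i \<noteq> 0} \<subseteq> {k}" by (auto simp: seq_single_def)
  then have "finite {i. seq_single k (z k) i \<noteq> 0}" by (rule finite_subset) simp
  with assms show ?thesis by (auto simp: c00_def l1sum_def seq_single_def subspace_0)
qed

lemma seq_trunc_in_c00:
  assumes "\<And>n. subspace (S n)" "z \<in> l1sum S"
  shows "seq_trunc z n \<in> c00 S"
proof -
  have "{i. seq_trunc z n i \<noteq> 0} \<subseteq> {..<n}" by (auto simp: seq_trunc_def)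
  then have "finite {i. seq_trunc z n i \<noteq> 0}" by (rule finite_subset) simp
  with assms show ?thesis by (auto simp: c00_def l1sum_def seq_trunc_def subspace_0)
qed

locale c00_embedding =
  fixes S :: "nat \<Rightarrow> 'a::banach set"
    and J :: "(nat \<Rightarrow> 'a) \<Rightarrow> 'b::banach"
    and c C :: real
  assumes subspace_S: "\<And>n. subspace (S n)"
    and closed_S: "\<And>n. closed (S n)"
    and J_add: "\<And>x y. x \<in> c00 S \<Longrightarrow> y \<in> c00 S \<Longrightarrow> J (\<lambda>k. x k + y k) = J x + J y"
    and J_scale: "\<And>a x. x \<in> c00 S \<Longrightarrow> J (\<lambda>k. a *\<^sub>R x k) = a *\<^sub>R J x"
    and J_lower: "\<And>x. x \<in> c00 S \<Longrightarrow> c * l1norm x \<le> norm (J x)"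
    and J_upper: "\<And>x. x \<in> c00 S \<Longrightarrow> norm (J x) \<le> C * l1norm x"
    and c_pos: "0 < c"
begin

definition extension :: "(nat \<Rightarrow> 'a) \<Rightarrow> 'b" where
  "extension z = (\<Sum>k. J (seq_single k (z k)))"

lemma J_zero: "J (\<lambda>_. 0) = 0"
proof -
  have "(\<lambda>_. 0) \<in> c00 S" by (simp add: c00_def subspace_0[OF subspace_S])
  from J_scale[OF this, of 0] show ?thesis by simp
qed

lemma J_seq_trunc:
  assumes "z \<in> l1sum S"
  shows "J (seq_trunc z n) = (\<Sum>k<n. J (seq_single k (z k)))"
proof (induction n)
  case 0
  show ?case by (simp add: seq_trunc_def J_zero)
next
  case (Suc n)
  have "seq_trunc z (Suc n) = (\<lambda>i. seq_trunc z n i + seq_single n (z n) i)"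
    by (auto simp: seq_trunc_def seq_single_def)
  then show ?case
    using Suc J_add[OF seq_trunc_in_c00[OF subspace_S assms] seq_single_in_c00[OF subspace_S assms]]
    by simp
qed

lemma summable_norm_J_seq_single:
  assumes "z \<in> l1sum S"
  shows "summable (\<lambda>k. norm (J (seq_single k (z k))))"
proof (rule summable_norm_comparison_test)
  show "\<exists>N. \<forall>k\<ge>N. norm (J (seq_single k (z k))) \<le> C * norm (z k)"
    using J_upper[OF seq_single_in_c00[OF subspace_S assms]] by (simp add: l1norm_seq_single)
  show "summable (\<lambda>k. C * norm (z k))"
    using assms by (auto simp: l1sum_def intro: summable_mult)
qed

lemma summable_J_seq_single: "z \<in> l1sum S \<Longrightarrow> summable (\<lambda>k. J (seq_single k (z k)))"
  by (rule summable_norm_cancel[OF summable_norm_J_seq_single])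

lemma J_seq_trunc_LIMSEQ:
  assumes "z \<in> l1sum S"
  shows "(\<lambda>n. J (seq_trunc z n)) \<longlonglongrightarrow> extension z"
  unfolding J_seq_trunc[OF assms] extension_def
  by (rule summable_LIMSEQ[OF summable_J_seq_single[OF assms]])

lemma extension_bounds:
  assumes "z \<in> l1sum S"
  shows "c * l1norm z \<le> norm (extension z)" and "norm (extension z) \<le> C * l1norm z"
proof -
  have norm_lim: "(\<lambda>n. norm (J (seq_trunc z n))) \<longlonglongrightarrow> norm (extension z)"
    by (rule tendsto_norm[OF J_seq_trunc_LIMSEQ[OF assms]])
  have "(\<lambda>n. \<Sum>k<n. norm (z k)) \<longlonglongrightarrow> l1norm z"
    using assms unfolding l1norm_def l1sum_def by (auto intro: summable_LIMSEQ)
  then have sum_lim: "(\<lambda>n. a * (\<Sum>k<n. norm (z k))) \<longlonglongrightarrow> a * l1norm z" for a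
    by (rule tendsto_mult[OF tendsto_const])
  have "c * (\<Sum>k<n. norm (z k)) \<le> norm (J (seq_trunc z n))"
    and "norm (J (seq_trunc z n)) \<le> C * (\<Sum>k<n. norm (z k))" for n
    using J_lower[OF seq_trunc_in_c00[OF subspace_S assms]] J_upper[OF seq_trunc_in_c00[OF subspace_S assms]]
    by (simp_all add: l1norm_seq_trunc)
  then show "c * l1norm z \<le> norm (extension z)" and "norm (extension z) \<le> C * l1norm z"
    using LIMSEQ_le[OF sum_lim norm_lim] LIMSEQ_le[OF norm_lim sum_lim] by blast+
qed

lemma extension_add:
  assumes "z \<in> l1sum S" "w \<in> l1sum S"
  shows "extension (\<lambda>k. z k + w k) = extension z + extension w"
proof -
  have "seq_single k (z k + w k) = (\<lambda>i. seq_single k (z k) i + seq_single k (w k) i)" for k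
    by (auto simp: seq_single_def)
  then have "extension (\<lambda>k. z k + w k) = (\<Sum>k. J (seq_single k (z k)) + J (seq_single k (w k)))"
    using J_add[OF seq_single_in_c00[OF subspace_S assms(1)] seq_single_in_c00[OF subspace_S assms(2)]]
    by (simp add: extension_def)
  also have "\<dots> = extension z + extension w"
    unfolding extension_def
    by (intro suminf_add[symmetric] summable_J_seq_single assms)
  finally show ?thesis .
qed

lemma extension_scale:
  assumes "z \<in> l1sum S"
  shows "extension (\<lambda>k. a *\<^sub>R z k) = a *\<^sub>R extension z"
proof -
  have "seq_single k (a *\<^sub>R z k) = (\<lambda>i. a *\<^sub>R seq_single k (z k) i)" for k
    by (auto simp: seq_single_def)
  then have "extension (\<lambda>k. a *\<^sub>R z k) = (\<Sum>k. a *\<^sub>R J (seq_single k (z k)))"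
    using J_scale[OF seq_single_in_c00[OF subspace_S assms]] by (simp add: extension_def)
  also have "\<dots> = a *\<^sub>R extension z"
    unfolding extension_def
    by (intro suminf_scaleR_right[symmetric] summable_J_seq_single assms)
  finally show ?thesis .
qed

lemma extension_diff:
  assumes "z \<in> l1sum S" "w \<in> l1sum S"
  shows "extension (\<lambda>k. z k - w k) = extension z - extension w"
  using extension_add[OF assms(1) l1sum_scale[OF subspace_S assms(2), of "-1"]]
    extension_scale[OF assms(2), of "-1"]
  by simp

lemma dist_extension_bounds:
  assumes "z \<in> l1sum S" "w \<in> l1sum S"
  shows "c * l1norm (\<lambda>k. z k - w k) \<le> dist (extension z) (extension w)"
    and "dist (extension z) (extension w) \<le> C * l1norm (\<lambda>k. z k - w k)"
  using extension_bounds[OF l1sum_diff[OF subspace_S assms]] extension_diff[OF assms]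
  by (simp_all add: dist_norm)

lemma extension_c00:
  assumes "x \<in> c00 S"
  shows "extension x = J x"
proof -
  from assms have "finite {k. x k \<noteq> 0}" by (simp add: c00_def)
  then obtain m where "\<forall>k. x k \<noteq> 0 \<longrightarrow> k < m"
    using finite_nat_set_iff_bounded by auto
  then have "seq_trunc x n = x" if "n \<ge> m" for n
    using that by (auto simp: seq_trunc_def fun_eq_iff not_less)
  then have "(\<lambda>n. J (seq_trunc x n)) \<longlonglongrightarrow> J x"
    by (intro tendsto_eventually) (auto simp: eventually_sequentially intro!: exI[of _ m])
  with J_seq_trunc_LIMSEQ[OF c00_subset_l1sum[THEN subsetD, OF assms]] show ?thesis
    using LIMSEQ_unique by blast
qed

lemma inj_on_extension: "inj_on extension (l1sum S)"
proof (rule inj_onI)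
  fix z w assume zw: "z \<in> l1sum S" "w \<in> l1sum S" and "extension z = extension w"
  then have "c * l1norm (\<lambda>k. z k - w k) \<le> 0"
    using dist_extension_bounds(1)[OF zw] by simp
  then have "l1norm (\<lambda>k. z k - w k) \<le> 0"
    using c_pos by (simp add: mult_le_0_iff)
  moreover have "summable (\<lambda>k. norm (z k - w k))"
    using l1sum_diff[OF subspace_S zw] by (simp add: l1sum_def)
  ultimately have "norm (z k - w k) \<le> 0" for k
    using norm_le_l1norm[of "\<lambda>k. z k - w k" k] by linarith
  then show "z = w" by auto
qed

lemma extension_LIMSEQ:
  assumes "z \<in> l1sum S" "\<And>j. u j \<in> l1sum S" "(\<lambda>j. l1norm (\<lambda>k. u j k - z k)) \<longlonglongrightarrow> 0"
  shows "(\<lambda>j. extension (u j)) \<longlonglongrightarrow> extension z"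
proof -
  have "(\<lambda>j. dist (extension (u j)) (extension z)) \<longlonglongrightarrow> 0"
  proof (rule Lim_null_comparison)
    show "(\<lambda>j. C * l1norm (\<lambda>k. u j k - z k)) \<longlonglongrightarrow> 0"
      using tendsto_mult_right_zero[OF assms(3)] .
    show "\<forall>\<^sub>F j in sequentially. norm (dist (extension (u j)) (extension z)) \<le> C * l1norm (\<lambda>k. u j k - z k)"
      using dist_extension_bounds(2)[OF assms(2) assms(1)] by (intro always_eventually allI) simp
  qed
  then show ?thesis by (subst tendsto_dist_iff)
qed

lemma l1_cauchy_if_extension_cauchy:
  assumes "\<And>n. u n \<in> l1sum S" "Cauchy (\<lambda>n. extension (u n))" "e > 0"
  shows "\<exists>N. \<forall>i\<ge>N. \<forall>j\<ge>N. l1norm (\<lambda>k. u i k - u j k) < e"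
proof -
  have "c * e > 0" using c_pos \<open>e > 0\<close> by simp
  with assms(2) obtain N where N: "\<forall>i\<ge>N. \<forall>j\<ge>N. dist (extension (u i)) (extension (u j)) < c * e"
    by (rule metric_CauchyD[elim_format]) blast
  have "l1norm (\<lambda>k. u i k - u j k) < e" if "i \<ge> N" "j \<ge> N" for i j
  proof -
    have "c * l1norm (\<lambda>k. u i k - u j k) \<le> dist (extension (u i)) (extension (u j))"
      by (rule dist_extension_bounds(1)[OF assms(1) assms(1)])
    also have "\<dots> < c * e" using N that by blast
    finally show ?thesis using c_pos by simp
  qed
  then show ?thesis by blast
qed

lemma extension_surj:
  assumes dense: "closure (J ` c00 S) = UNIV"
  shows "extension ` l1sum S = UNIV"
proof -
  have "y \<in> extension ` l1sum S" for y
  proof -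
    from dense have "y \<in> closure (J ` c00 S)" by simp
    then obtain v where v: "\<And>n. v n \<in> J ` c00 S" and "v \<longlonglongrightarrow> y"
      unfolding closure_sequential by blast
    from v have "\<forall>n. \<exists>x. x \<in> c00 S \<and> v n = J x" by blast
    from choice[OF this] obtain u where u: "\<And>n. u n \<in> c00 S" and "v = (\<lambda>n. J (u n))"
      by auto
    with \<open>v \<longlonglongrightarrow> y\<close> extension_c00 have lim: "(\<lambda>n. extension (u n)) \<longlonglongrightarrow> y" by simp
    have ul: "u n \<in> l1sum S" for n
      using u c00_subset_l1sum by blast
    obtain z where z: "z \<in> l1sum S" and zlim: "(\<lambda>j. l1norm (\<lambda>k. u j k - z k)) \<longlonglongrightarrow> 0"
      using l1sum_complete[of S u, OF closed_S ul l1_cauchy_if_extension_cauchy[OF ul LIMSEQ_imp_Cauchy[OF lim]]]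
      by blast
    have "(\<lambda>j. extension (u j)) \<longlonglongrightarrow> extension z" by (rule extension_LIMSEQ[OF z ul zlim])
    with lim have "y = extension z" by (rule LIMSEQ_unique)
    with z show ?thesis by blast
  qed
  then show ?thesis by blast
qed

end

theorem proposition1p3:
  fixes S :: "nat \<Rightarrow> 'a::banach set"
    and J :: "(nat \<Rightarrow> 'a) \<Rightarrow> 'b::banach"
  assumes subsp: "\<And>n. subspace (S n)"
    and clsd: "\<And>n. closed (S n)"
    and J_add: "\<And>x y. x \<in> c00 S \<Longrightarrow> y \<in> c00 S \<Longrightarrow> J (\<lambda>k. x k + y k) = J x + J y"
    and J_scale: "\<And>c x. x \<in> c00 S \<Longrightarrow> J (\<lambda>k. c *\<^sub>R x k) = c *\<^sub>R J x"
    and J_isom: "\<And>x. x \<in> c00 S \<Longrightarrow> norm (J x) = c00_norm x"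
    and J_dense: "closure (J ` c00 S) = UNIV"
  shows "\<exists>T :: (nat \<Rightarrow> 'a) \<Rightarrow> 'b.
           (\<forall>z\<in>l1sum S. \<forall>w\<in>l1sum S. T (\<lambda>k. z k + w k) = T z + T w)
         \<and> (\<forall>c. \<forall>z\<in>l1sum S. T (\<lambda>k. c *\<^sub>R z k) = c *\<^sub>R T z)
         \<and> (\<forall>x\<in>c00 S. T x = J x)
         \<and> bij_betw T (l1sum S) UNIV
         \<and> (\<forall>z\<in>l1sum S. (1/2) * l1norm z \<le> norm (T z) \<and> norm (T z) \<le> l1norm z)"
proof -
  interpret c00_embedding S J "1/2" 1
  proof
    show "(1/2) * l1norm x \<le> norm (J x)" and "norm (J x) \<le> 1 * l1norm x" if "x \<in> c00 S" for x
      using c00_norm_bounds[OF that] J_isom[OF that] by simp_all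
  qed (use assms in auto)
  have "bij_betw extension (l1sum S) UNIV"
    using inj_on_extension extension_surj[OF J_dense] by (simp add: bij_betw_def)
  then show ?thesis
    using extension_add extension_scale extension_c00 extension_bounds by (intro exI[of _ extension]) auto
qed

end
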